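(* Let $\mu$ be a probability measure and $\beta:\mathbb R^+\to\mathbb R^+$. Assume that every $f\in\mathcal A$ satisfies $$\int|f-m|\,d\mu\le\beta(s)\int\sqrt{\Gamma(f)}\,d\mu+s\,\mathrm{Osc}(f)\qquad\forall s\in(0,1),$$ where $m$ is a median of $f$ under $\mu$. Then every $f\in\mathcal A$ satisfies $$\mathrm{Var}_\mu(f)\le4\beta\Big(\frac s2\Big)^2\int\Gamma(f)\,d\mu+s\,\mathrm{Osc}(f)^2\qquad\forall s\in(0,1/4).$$
   Context: Standing framework: $\mu$ a probability measure on a Polish space $E$, $L$ a $\mu$-symmetric diffusion operator with an algebra $\mathcal A$ of bounded functions containing constants, and carré du champ $\Gamma(f)=\Gamma(f,f)$ where $\Gamma(f,g)=\frac12(L(fg)-fLg-gLf)$, satisfying the chain rule (in particular $\Gamma(f^2)=4f^2\Gamma(f)$). $\mathrm{Osc}(f)=\operatorname{ess\,sup}f-\operatorname{ess\,inf}f$. *)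

theory Defs
  imports "HOL-Probability.Probability"
begin

definition ess_sup :: "'a measure \<Rightarrow> ('a \<Rightarrow> real) \<Rightarrow> ereal" where
  "ess_sup M f = esssup M (\<lambda>x. ereal (f x))"

definition ess_inf :: "'a measure \<Rightarrow> ('a \<Rightarrow> real) \<Rightarrow> ereal" where
  "ess_inf M f = - esssup M (\<lambda>x. ereal (- f x))"

definition Osc :: "'a measure \<Rightarrow> ('a \<Rightarrow> real) \<Rightarrow> real" where
  "Osc M f = real_of_ereal (ess_sup M f - ess_inf M f)"

definition median :: "'a measure \<Rightarrow> ('a \<Rightarrow> real) \<Rightarrow> real \<Rightarrow> bool" where
  "median M f m \<longleftrightarrow> measure M {x \<in> space M. f x \<ge> m} \<ge> 1/2
                   \<and> measure M {x \<in> space M. f x \<le> m} \<ge> 1/2"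

definition carre_du_champ ::
  "(('a \<Rightarrow> real) \<Rightarrow> ('a \<Rightarrow> real)) \<Rightarrow> ('a \<Rightarrow> real) \<Rightarrow> ('a \<Rightarrow> real) \<Rightarrow> ('a \<Rightarrow> real)" where
  "carre_du_champ L f g = (\<lambda>x. (L (\<lambda>y. f y * g y) x - f x * L g x - g x * L f x) / 2)"

abbreviation Gamma :: "(('a \<Rightarrow> real) \<Rightarrow> ('a \<Rightarrow> real)) \<Rightarrow> ('a \<Rightarrow> real) \<Rightarrow> ('a \<Rightarrow> real)" where
  "Gamma L f \<equiv> carre_du_champ L f f"

definition smooth_fun :: "(real \<Rightarrow> real) \<Rightarrow> bool" where
  "smooth_fun \<Phi> \<longleftrightarrow> (\<forall>n. (deriv ^^ n) \<Phi> differentiable_on UNIV)"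

definition diffusion_framework ::
  "'a::polish_space measure \<Rightarrow> ('a \<Rightarrow> real) set \<Rightarrow> (('a \<Rightarrow> real) \<Rightarrow> ('a \<Rightarrow> real)) \<Rightarrow> bool" where
  "diffusion_framework M A L \<longleftrightarrow>
     prob_space M \<and> sets M = sets borel \<and>
     (\<forall>f\<in>A. f \<in> borel_measurable M \<and> (\<exists>C. \<forall>x. \<bar>f x\<bar> \<le> C)) \<and>
     (\<forall>c. (\<lambda>x. c) \<in> A) \<and>
     (\<forall>f\<in>A. \<forall>g\<in>A. (\<lambda>x. f x + g x) \<in> A \<and> (\<lambda>x. f x * g x) \<in> A) \<and>
     (\<forall>c. \<forall>f\<in>A. (\<lambda>x. c * f x) \<in> A) \<and>
     (\<forall>f\<in>A. L f \<in> A) \<and>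
     (\<forall>f\<in>A. \<forall>g\<in>A. \<forall>a b. L (\<lambda>x. a * f x + b * g x) = (\<lambda>x. a * L f x + b * L g x)) \<and>
     (\<forall>f\<in>A. \<forall>g\<in>A. (\<integral>x. f x * L g x \<partial>M) = (\<integral>x. g x * L f x \<partial>M)) \<and>
     (\<forall>f\<in>A. \<forall>x. Gamma L f x \<ge> 0) \<and>
     (\<forall>f\<in>A. \<forall>\<Phi>. smooth_fun \<Phi> \<longrightarrow>
        (\<lambda>x. \<Phi> (f x)) \<in> A \<and>
        L (\<lambda>x. \<Phi> (f x)) = (\<lambda>x. deriv \<Phi> (f x) * L f x + (deriv ^^ 2) \<Phi> (f x) * Gamma L f x))"

end

theory Submission
  imports Defs
begin

(* For f in A with median m, apply the hypothesis (with s/2) to g = P(f - m), where P is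
   a polynomial approximation of the signed square u |u| with error d.  Then 0 is a
   median of g, |g| >= (f - m)^2, the chain rule gives sqrt(Gamma g) <= (2|f - m| + 2d)
   sqrt(Gamma f), and Osc(g) <= Osc(f)^2 + 2d Osc(f).  Young's inequality absorbs half of
   the integral of (f - m)^2 into the left-hand side, giving
     int (f - m)^2 <= 4 beta(s/2)^2 int Gamma f + s Osc(f)^2 + d K;
   letting d -> 0 and using Var f <= int (f - m)^2 proves the theorem. *)

lemma real_polynomial_function_deriv:
  assumes "real_polynomial_function p"
  obtains p' where "real_polynomial_function p'" "\<And>x. (p has_real_derivative p' x) (at x)"
    "deriv p = p'"
proof -
  obtain p' where p': "real_polynomial_function p'" "\<And>x. (p has_real_derivative p' x) (at x)"
    using has_real_derivative_polynomial_function[OF assms] by blast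
  then have "deriv p = p'" by (intro ext DERIV_imp_deriv)
  with p' that show ?thesis by blast
qed

lemma real_polynomial_function_smooth:
  assumes "real_polynomial_function p"
  shows "smooth_fun p"
proof -
  have "real_polynomial_function ((deriv ^^ n) p)" for n
  proof (induction n)
    case 0
    then show ?case using assms by simp
  next
    case (Suc n)
    then obtain q where "real_polynomial_function q" "deriv ((deriv ^^ n) p) = q"
      using real_polynomial_function_deriv by metis
    then show ?case by simp
  qed
  then show ?thesis
    unfolding smooth_fun_def using differentiable_on_real_polynomial_function by blast
qed

(* By Weierstrass, a polynomial P1 with 2|u| <= P1 u <= 2|u| + 2d on [-R, R]; its
   antiderivative P with P 0 = 0 approximates the signed square u |u|. *)
lemma polynomial_antiderivative_approximating_two_abs:
  fixes R d :: real
  assumes "0 < d"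
  obtains P P1 where "real_polynomial_function P" "\<And>u. (P has_real_derivative P1 u) (at u)"
    "P 0 = 0" "\<And>u. \<bar>u\<bar> \<le> R \<Longrightarrow> 2 * \<bar>u\<bar> \<le> P1 u \<and> P1 u \<le> 2 * \<bar>u\<bar> + 2 * d"
proof -
  have "continuous_on {-R..R} (\<lambda>x::real. 2 * \<bar>x\<bar>)" by (intro continuous_intros)
  then obtain Q where Q: "real_polynomial_function Q"
      "\<And>x. x \<in> {-R..R} \<Longrightarrow> \<bar>2 * \<bar>x\<bar> - Q x\<bar> < d"
    using Stone_Weierstrass_real_polynomial_function[of "{-R..R}" _ d] assms by auto
  then obtain a n where Q_eq: "Q = (\<lambda>x. \<Sum>i\<le>n. a i * x ^ i)"
    using real_polynomial_function_iff_sum by metis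
  define P where "P = (\<lambda>x::real. (\<Sum>i\<le>n. a i * x ^ Suc i / real (Suc i)) + d * x)"
  have "real_polynomial_function P"
    unfolding P_def
    by (intro real_polynomial_function_sum real_polynomial_function_divide
        real_polynomial_function_power real_polynomial_function.intros)
      auto
  moreover have "(P has_real_derivative Q u + d) (at u)" for u
  proof -
    have "((\<lambda>x. a i * x ^ Suc i / real (Suc i)) has_real_derivative a i * u ^ i) (at u)" for i
      using DERIV_cdivide[OF DERIV_cmult[OF DERIV_pow[of "Suc i" u], of "a i"], of "real (Suc i)"]
      by (simp del: of_nat_Suc)
    then have "((\<lambda>x. \<Sum>i\<le>n. a i * x ^ Suc i / real (Suc i)) has_real_derivative Q u) (at u)"
      unfolding Q_eq by (intro DERIV_sum)
    from DERIV_add[OF this DERIV_cmult[OF DERIV_ident, of d]] show ?thesis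
      unfolding P_def by simp
  qed
  moreover have "2 * \<bar>u\<bar> \<le> Q u + d \<and> Q u + d \<le> 2 * \<bar>u\<bar> + 2 * d" if "\<bar>u\<bar> \<le> R" for u
  proof -
    have "\<bar>2 * \<bar>u\<bar> - Q u\<bar> < d" using Q(2)[of u] that by (simp add: abs_le_iff)
    then show ?thesis by linarith
  qed
  ultimately show ?thesis using that[of P "\<lambda>u. Q u + d"] by (simp add: P_def)
qed

lemma increment_le_of_derivative_le:
  fixes F G F' G' :: "real \<Rightarrow> real"
  assumes "u \<le> v"
    and "\<And>x. (F has_real_derivative F' x) (at x)" "\<And>x. (G has_real_derivative G' x) (at x)"
    and "\<And>x. u \<le> x \<Longrightarrow> x \<le> v \<Longrightarrow> F' x \<le> G' x"
  shows "F v - F u \<le> G v - G u"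
proof -
  have "(\<lambda>x. G x - F x) u \<le> (\<lambda>x. G x - F x) v"
  proof (rule DERIV_nonneg_imp_nondecreasing[OF assms(1)])
    fix x assume "u \<le> x" "x \<le> v"
    then show "\<exists>y. ((\<lambda>x. G x - F x) has_real_derivative y) (at x) \<and> 0 \<le> y"
      using assms(2-4) by (intro exI[of _ "G' x - F' x"]) (auto intro: DERIV_diff)
  qed
  then show ?thesis by simp
qed

lemma signed_square_approximation:
  fixes R d :: real
  assumes "0 < d"
  obtains P P1 where "real_polynomial_function P" "\<And>u. (P has_real_derivative P1 u) (at u)"
    "\<And>u. \<bar>u\<bar> \<le> R \<Longrightarrow> 0 \<le> P1 u \<and> P1 u \<le> 2 * \<bar>u\<bar> + 2 * d"
    "\<And>u. 0 \<le> u \<Longrightarrow> u \<le> R \<Longrightarrow> u\<^sup>2 \<le> P u \<and> P u \<le> u\<^sup>2 + 2 * d * u"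
    "\<And>u. - R \<le> u \<Longrightarrow> u \<le> 0 \<Longrightarrow> - u\<^sup>2 + 2 * d * u \<le> P u \<and> P u \<le> - u\<^sup>2"
    "\<And>u v. - R \<le> u \<Longrightarrow> u \<le> v \<Longrightarrow> v \<le> R \<Longrightarrow> P u \<le> P v"
proof -
  obtain P P1 where poly: "real_polynomial_function P"
    and P': "\<And>u. (P has_real_derivative P1 u) (at u)" and P0: "P 0 = 0"
    and P1: "\<And>u. \<bar>u\<bar> \<le> R \<Longrightarrow> 2 * \<bar>u\<bar> \<le> P1 u \<and> P1 u \<le> 2 * \<bar>u\<bar> + 2 * d"
    using polynomial_antiderivative_approximating_two_abs[OF assms] by metis
  have sq': "((\<lambda>x. x\<^sup>2) has_real_derivative 2 * x) (at x)"
    and sqd': "((\<lambda>x. x\<^sup>2 + 2 * d * x) has_real_derivative 2 * x + 2 * d) (at x)"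
    and msq': "((\<lambda>x. - x\<^sup>2) has_real_derivative - 2 * x) (at x)"
    and msqd': "((\<lambda>x. - x\<^sup>2 + 2 * d * x) has_real_derivative - 2 * x + 2 * d) (at x)" for x :: real
    by (auto intro!: derivative_eq_intros)
  have P1_right: "2 * x \<le> P1 x \<and> P1 x \<le> 2 * x + 2 * d" if "0 \<le> x" "x \<le> R" for x
    using P1[of x] that by simp
  have P1_left: "- 2 * x \<le> P1 x \<and> P1 x \<le> - 2 * x + 2 * d" if "- R \<le> x" "x \<le> 0" for x
    using P1[of x] that by simp
  have "u\<^sup>2 \<le> P u \<and> P u \<le> u\<^sup>2 + 2 * d * u" if u: "0 \<le> u" "u \<le> R" for u
  proof -
    have "u\<^sup>2 - 0\<^sup>2 \<le> P u - P 0"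
      by (rule increment_le_of_derivative_le[OF u(1) sq' P']) (use P1_right u in auto)
    moreover have "P u - P 0 \<le> (u\<^sup>2 + 2 * d * u) - (0\<^sup>2 + 2 * d * 0)"
      by (rule increment_le_of_derivative_le[OF u(1) P' sqd']) (use P1_right u in auto)
    ultimately show ?thesis using P0 by simp
  qed
  moreover have "- u\<^sup>2 + 2 * d * u \<le> P u \<and> P u \<le> - u\<^sup>2" if u: "- R \<le> u" "u \<le> 0" for u
  proof -
    have "- 0\<^sup>2 - - u\<^sup>2 \<le> P 0 - P u"
      by (rule increment_le_of_derivative_le[OF u(2) msq' P']) (use P1_left u in auto)
    moreover have "P 0 - P u \<le> (- 0\<^sup>2 + 2 * d * 0) - (- u\<^sup>2 + 2 * d * u)"
      by (rule increment_le_of_derivative_le[OF u(2) P' msqd']) (use P1_left u in auto)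
    ultimately show ?thesis using P0 by simp
  qed
  moreover have "P u \<le> P v" if uv: "- R \<le> u" "u \<le> v" "v \<le> R" for u v
  proof -
    have "(\<lambda>x. 0) v - (\<lambda>x. 0) u \<le> P v - P u"
      by (rule increment_le_of_derivative_le[OF uv(2) DERIV_const P'])
        (use P1 uv in \<open>smt (verit) abs_ge_zero\<close>)
    then show ?thesis by simp
  qed
  moreover have "0 \<le> P1 u \<and> P1 u \<le> 2 * \<bar>u\<bar> + 2 * d" if "\<bar>u\<bar> \<le> R" for u
    using P1[OF that] by linarith
  ultimately show ?thesis using that poly P' by blast
qed

context prob_space
begin

lemma esssup_of_bounded:
  assumes "g \<in> borel_measurable M" "\<And>x. \<bar>g x\<bar> \<le> C"
  obtains B where "esssup M (\<lambda>x. ereal (g x)) = ereal B" "AE x in M. g x \<le> B"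
    "\<And>c. (AE x in M. g x \<le> c) \<Longrightarrow> B \<le> c"
proof -
  define E where "E = esssup M (\<lambda>x. ereal (g x))"
  have meas: "(\<lambda>x. ereal (g x)) \<in> borel_measurable M" using assms(1) by measurable
  have "E \<le> ereal C"
    unfolding E_def by (rule esssup_I[OF meas]) (use assms(2) abs_le_D1 in auto)
  moreover have "ereal (- C) \<le> E"
  proof -
    have "ereal (- C) = esssup M (\<lambda>x. ereal (- C))"
      using esssup_const[of M "ereal (- C)"] emeasure_space_1 by simp
    also have "\<dots> \<le> E"
      unfolding E_def
    proof (rule esssup_mono)
      show "ereal (- C) \<le> ereal (g x)" for x using assms(2)[of x] by simp
    qed simp
    finally show ?thesis .
  qed
  ultimately obtain B where B: "E = ereal B" by (cases E) auto
  have "AE x in M. g x \<le> B"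
    using esssup_AE[of "\<lambda>x. ereal (g x)" M] unfolding E_def[symmetric] B by simp
  moreover have "B \<le> c" if "AE x in M. g x \<le> c" for c
  proof -
    have "E \<le> ereal c" unfolding E_def by (rule esssup_I[OF meas]) (use that in auto)
    then show ?thesis using B by simp
  qed
  ultimately show ?thesis using that B E_def by simp
qed

lemma Osc_ess_bounds:
  assumes "g \<in> borel_measurable M" "\<And>x. \<bar>g x\<bar> \<le> C"
  obtains a b where "AE x in M. g x \<le> b" "AE x in M. a \<le> g x" "Osc M g = b - a"
    "\<And>c. (AE x in M. g x \<le> c) \<Longrightarrow> b \<le> c" "\<And>c. (AE x in M. c \<le> g x) \<Longrightarrow> c \<le> a"
proof -
  obtain b where b: "esssup M (\<lambda>x. ereal (g x)) = ereal b" "AE x in M. g x \<le> b"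
    "\<And>c. (AE x in M. g x \<le> c) \<Longrightarrow> b \<le> c"
    using esssup_of_bounded[OF assms] by blast
  have "(\<lambda>x. - g x) \<in> borel_measurable M" using assms(1) by measurable
  then obtain a' where a': "esssup M (\<lambda>x. ereal (- g x)) = ereal a'" "AE x in M. - g x \<le> a'"
    "\<And>c. (AE x in M. - g x \<le> c) \<Longrightarrow> a' \<le> c"
    using esssup_of_bounded[of "\<lambda>x. - g x" C] assms(2) by auto
  have "Osc M g = b - (- a')"
    unfolding Osc_def ess_sup_def ess_inf_def a'(1) b(1) by simp
  moreover have "AE x in M. - a' \<le> g x" using a'(2) by auto
  moreover have "c \<le> - a'" if "AE x in M. c \<le> g x" for c
    using a'(3)[of "- c"] that by (auto elim: eventually_mono)
  ultimately show ?thesis using that b by blast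
qed

lemma Osc_le:
  assumes "g \<in> borel_measurable M" "\<And>x. \<bar>g x\<bar> \<le> C"
    and "AE x in M. g x \<le> hi" "AE x in M. lo \<le> g x"
  shows "Osc M g \<le> hi - lo"
proof -
  obtain a b where "Osc M g = b - a"
    "\<And>c. (AE x in M. g x \<le> c) \<Longrightarrow> b \<le> c" "\<And>c. (AE x in M. c \<le> g x) \<Longrightarrow> c \<le> a"
    using Osc_ess_bounds[OF assms(1,2)] by metis
  with assms(3,4) show ?thesis by force
qed

(* Every random variable has a median: the least t with P(f <= t) >= 1/2, using right
   continuity of the distribution function and its left limit P(f < t). *)
lemma median_exists:
  assumes f: "f \<in> borel_measurable M"
  obtains m where "median M f m"
proof -
  define \<mu> where "\<mu> = distr M borel f"
  interpret \<mu>: real_distribution \<mu> unfolding \<mu>_def using f by simp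
  have measure_\<mu>: "measure \<mu> B = prob {x \<in> space M. f x \<in> B}" if "B \<in> sets borel" for B
    unfolding \<mu>_def using f that by (simp add: measure_distr vimage_def Int_def conj_commute)
  define S where "S = {t. 1/2 \<le> cdf \<mu> t}"
  define m where "m = Inf S"
  have "\<forall>\<^sub>F t in at_top. 1/2 < cdf \<mu> t"
    by (rule order_tendstoD(1)[OF \<mu>.cdf_lim_at_top_prob]) simp
  then obtain t1 where "\<And>t. t1 \<le> t \<Longrightarrow> 1/2 < cdf \<mu> t"
    by (auto simp: eventually_at_top_linorder)
  then have S_ne: "S \<noteq> {}" unfolding S_def by (metis empty_iff less_eq_real_def mem_Collect_eq order_refl)
  have "\<forall>\<^sub>F t in at_bot. cdf \<mu> t < 1/2"
    by (rule order_tendstoD(2)[OF \<mu>.cdf_lim_at_bot]) simp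
  then obtain t0 where "\<And>t. t \<le> t0 \<Longrightarrow> cdf \<mu> t < 1/2" by (auto simp: eventually_at_bot_linorder)
  then have "t0 \<le> t" if "t \<in> S" for t using that unfolding S_def by (smt (verit) mem_Collect_eq)
  then have S_bdd: "bdd_below S" by (rule bdd_belowI)
  have "1/2 \<le> cdf \<mu> m"
  proof (rule tendsto_lowerbound)
    show "(cdf \<mu> \<longlongrightarrow> cdf \<mu> m) (at_right m)"
      using \<mu>.cdf_is_right_cont[of m] by (simp add: continuous_within)
    show "\<forall>\<^sub>F t in at_right m. 1/2 \<le> cdf \<mu> t"
    proof (rule eventually_at_rightI[of m "m + 1"])
      fix t assume "t \<in> {m <..< m + 1}"
      then obtain s where "s \<in> S" "s < t" using cInf_less_iff[OF S_ne S_bdd] m_def by auto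
      then show "1/2 \<le> cdf \<mu> t" unfolding S_def using \<mu>.cdf_nondecreasing[of s t] by simp
    qed simp
  qed simp
  moreover have "measure \<mu> {..<m} \<le> 1/2"
  proof (rule tendsto_upperbound)
    show "(cdf \<mu> \<longlongrightarrow> measure \<mu> {..<m}) (at_left m)" by (rule \<mu>.cdf_at_left)
    show "\<forall>\<^sub>F t in at_left m. cdf \<mu> t \<le> 1/2"
    proof (rule eventually_at_leftI[of "m - 1"])
      fix t assume "t \<in> {m - 1 <..< m}"
      then have "t \<notin> S" using cInf_lower[OF _ S_bdd] m_def by force
      then show "cdf \<mu> t \<le> 1/2" unfolding S_def by simp
    qed simp
  qed simp
  moreover have "prob {x \<in> space M. m \<le> f x} = 1 - prob {x \<in> space M. f x < m}"
  proof -
    have "{x \<in> space M. m \<le> f x} = space M - {x \<in> space M. f x < m}" by auto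
    moreover have "{x \<in> space M. f x < m} \<in> events" using f by measurable
    ultimately show ?thesis by (simp add: prob_compl)
  qed
  ultimately have "median M f m"
    unfolding median_def cdf_def measure_\<mu>[OF atMost_borel] measure_\<mu>[OF lessThan_borel] by simp
  then show ?thesis by (rule that)
qed

lemma median_between_ess_bounds:
  assumes med: "median M f m" and f: "f \<in> borel_measurable M"
    and lo: "AE x in M. a \<le> f x" and hi: "AE x in M. f x \<le> b"
  shows "a \<le> m" "m \<le> b"
proof -
  have null: "prob {x \<in> space M. P x} = 0" if "AE x in M. \<not> P x" "Measurable.pred M P" for P
    using that by (subst prob_eq_0) (auto elim: eventually_mono)
  show "a \<le> m"
  proof (rule ccontr)
    assume "\<not> a \<le> m"
    then have "prob {x \<in> space M. f x \<le> m} = 0"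
      by (intro null) (use lo f in \<open>auto elim: eventually_mono\<close>)
    then show False using med unfolding median_def by simp
  qed
  show "m \<le> b"
  proof (rule ccontr)
    assume "\<not> m \<le> b"
    then have "prob {x \<in> space M. m \<le> f x} = 0"
      by (intro null) (use hi f in \<open>auto elim: eventually_mono\<close>)
    then show False using med unfolding median_def by simp
  qed
qed

lemma median_zero_of_sign_compatible:
  assumes med: "median M f m" and g: "g \<in> borel_measurable M"
    and up: "\<And>x. x \<in> space M \<Longrightarrow> m \<le> f x \<Longrightarrow> 0 \<le> g x"
    and down: "\<And>x. x \<in> space M \<Longrightarrow> f x \<le> m \<Longrightarrow> g x \<le> 0"
  shows "median M g 0"
proof -
  have "prob {x \<in> space M. m \<le> f x} \<le> prob {x \<in> space M. 0 \<le> g x}"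
    by (rule finite_measure_mono) (use g up in auto)
  moreover have "prob {x \<in> space M. f x \<le> m} \<le> prob {x \<in> space M. g x \<le> 0}"
    by (rule finite_measure_mono) (use g down in auto)
  ultimately show ?thesis using med unfolding median_def by linarith
qed

lemma variance_le_mean_square_deviation:
  fixes f :: "'a \<Rightarrow> real"
  assumes f: "integrable M f" and f2: "integrable M (\<lambda>x. (f x)\<^sup>2)"
  shows "variance f \<le> (\<integral>x. (f x - c)\<^sup>2 \<partial>M)"
proof -
  have "(\<integral>x. (f x - c)\<^sup>2 \<partial>M) = expectation (\<lambda>x. (f x)\<^sup>2) - 2 * c * expectation f + c\<^sup>2"
    unfolding power2_diff using f f2 by (simp add: prob_space)
  also have "\<dots> = variance f + (expectation f - c)\<^sup>2"
    using variance_eq[OF f f2] by (simp add: power2_diff)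
  finally show ?thesis by simp
qed

end

lemma le_of_le_plus_small_multiples:
  fixes x y K :: real
  assumes "\<And>d. 0 < d \<Longrightarrow> x \<le> y + d * K"
  shows "x \<le> y"
proof (rule field_le_epsilon)
  fix e :: real assume e: "0 < e"
  define d where "d = e / (\<bar>K\<bar> + 1)"
  have d: "0 < d" using e unfolding d_def by simp
  have "d * K \<le> d * (\<bar>K\<bar> + 1)" using d by (intro mult_left_mono) auto
  also have "\<dots> = e" unfolding d_def by simp
  finally show "x \<le> y + e" using assms[OF d] by linarith
qed

lemma young_product_bound:
  fixes \<beta> u q :: real
  shows "2 * \<beta> * \<bar>u\<bar> * q \<le> u\<^sup>2 / 2 + 2 * \<beta>\<^sup>2 * q\<^sup>2"
proof -
  have "0 \<le> (\<bar>u\<bar> - 2 * \<beta> * q)\<^sup>2" by simp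
  also have "\<dots> = u\<^sup>2 - 4 * \<beta> * \<bar>u\<bar> * q + 4 * \<beta>\<^sup>2 * q\<^sup>2"
    by (simp add: power2_eq_square algebra_simps)
  finally show ?thesis by simp
qed

locale diffusion =
  fixes M :: "'a::polish_space measure" and A :: "('a \<Rightarrow> real) set"
    and L :: "('a \<Rightarrow> real) \<Rightarrow> ('a \<Rightarrow> real)"
  assumes framework: "diffusion_framework M A L"
begin

sublocale prob_space M
  using framework unfolding diffusion_framework_def by blast

lemma A_measurable: "f \<in> A \<Longrightarrow> f \<in> borel_measurable M"
  using framework unfolding diffusion_framework_def by blast

lemma A_bounded: "f \<in> A \<Longrightarrow> \<exists>C. \<forall>x. \<bar>f x\<bar> \<le> C"
  using framework unfolding diffusion_framework_def by blast

lemma A_integrable: "f \<in> A \<Longrightarrow> integrable M f"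
  using A_bounded A_measurable by (metis integrable_const_bound real_norm_def AE_I2)

lemma A_mult: "f \<in> A \<Longrightarrow> g \<in> A \<Longrightarrow> (\<lambda>x. f x * g x) \<in> A"
  using framework unfolding diffusion_framework_def by blast

lemma A_square_deviation: "f \<in> A \<Longrightarrow> (\<lambda>x. (f x - c)\<^sup>2) \<in> A"
proof -
  assume f: "f \<in> A"
  have add: "\<And>g h. g \<in> A \<Longrightarrow> h \<in> A \<Longrightarrow> (\<lambda>x. g x + h x) \<in> A"
    and const: "(\<lambda>_. - c) \<in> A"
    using framework unfolding diffusion_framework_def by blast+
  from add[OF f const] have "(\<lambda>x. (f x - c) * (f x - c)) \<in> A" by (simp add: A_mult)
  then show ?thesis by (simp add: power2_eq_square)
qed

lemma Gamma_nonneg: "f \<in> A \<Longrightarrow> 0 \<le> Gamma L f x"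
  using framework unfolding diffusion_framework_def by blast

lemma Gamma_in_A:
  assumes f: "f \<in> A"
  shows "Gamma L f \<in> A"
proof -
  have closed: "\<And>g h. g \<in> A \<Longrightarrow> h \<in> A \<Longrightarrow> (\<lambda>x. g x + h x) \<in> A"
    "\<And>c h. h \<in> A \<Longrightarrow> (\<lambda>x. c * h x) \<in> A" "\<And>h. h \<in> A \<Longrightarrow> L h \<in> A"
    using framework unfolding diffusion_framework_def by blast+
  have "Gamma L f = (\<lambda>x. 1/2 * L (\<lambda>y. f y * f y) x + (- 1) * (f x * L f x))"
    by (rule ext) (simp add: carre_du_champ_def field_simps)
  also have "\<dots> \<in> A" using f by (intro closed A_mult)
  finally show ?thesis .
qed

lemma sqrt_Gamma_integrable:
  assumes f: "f \<in> A"
  shows "integrable M (\<lambda>x. sqrt (Gamma L f x))"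
proof -
  obtain C where C: "\<And>x. \<bar>Gamma L f x\<bar> \<le> C" using A_bounded[OF Gamma_in_A[OF f]] by blast
  have "sqrt (Gamma L f x) \<le> sqrt C" for x using abs_le_D1[OF C[of x]] by simp
  moreover have "(\<lambda>x. sqrt (Gamma L f x)) \<in> borel_measurable M"
    using A_measurable[OF Gamma_in_A[OF f]] by measurable
  ultimately show ?thesis
    using Gamma_nonneg[OF f] by (intro integrable_const_bound[of _ "sqrt C"]) auto
qed

(* Chain rule for the carre du champ: Gamma (Phi o f) = (Phi' o f)^2 Gamma f for
   polynomial Phi, derived from the diffusion property applied to Phi and Phi^2. *)
lemma Gamma_polynomial_comp:
  assumes f: "f \<in> A" and poly: "real_polynomial_function \<Phi>"
    and \<Phi>': "\<And>u. (\<Phi> has_real_derivative \<Phi>' u) (at u)"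
  shows "(\<lambda>x. \<Phi> (f x)) \<in> A" "Gamma L (\<lambda>x. \<Phi> (f x)) = (\<lambda>x. (\<Phi>' (f x))\<^sup>2 * Gamma L f x)"
proof -
  have chain: "(\<lambda>x. \<Psi> (f x)) \<in> A \<and>
      L (\<lambda>x. \<Psi> (f x)) = (\<lambda>x. deriv \<Psi> (f x) * L f x + deriv (deriv \<Psi>) (f x) * Gamma L f x)"
    if "real_polynomial_function \<Psi>" for \<Psi>
    using framework f real_polynomial_function_smooth[OF that]
    unfolding diffusion_framework_def by (simp add: numeral_2_eq_2)
  have d1: "deriv \<Phi> = \<Phi>'" by (intro ext DERIV_imp_deriv \<Phi>')
  then have "real_polynomial_function \<Phi>'"
    using real_polynomial_function_deriv[OF poly] by metis
  then obtain \<Phi>'' where \<Phi>'': "\<And>u. (\<Phi>' has_real_derivative \<Phi>'' u) (at u)" "deriv \<Phi>' = \<Phi>''"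
    using real_polynomial_function_deriv by metis
  have sq_deriv: "deriv (\<lambda>t. \<Phi> t * \<Phi> t) = (\<lambda>t. 2 * \<Phi> t * \<Phi>' t)"
    by (rule ext, rule DERIV_imp_deriv) (auto intro!: derivative_eq_intros \<Phi>')
  have sq_deriv2: "deriv (\<lambda>t. 2 * \<Phi> t * \<Phi>' t) = (\<lambda>t. 2 * (\<Phi>' t)\<^sup>2 + 2 * \<Phi> t * \<Phi>'' t)"
    by (rule ext, rule DERIV_imp_deriv)
      (auto simp: power2_eq_square intro!: derivative_eq_intros \<Phi>' \<Phi>'')
  have L_\<Phi>: "L (\<lambda>x. \<Phi> (f x)) = (\<lambda>x. \<Phi>' (f x) * L f x + \<Phi>'' (f x) * Gamma L f x)"
    using chain[OF poly] d1 \<Phi>''(2) by simp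
  have L_\<Phi>_sq: "L (\<lambda>x. \<Phi> (f x) * \<Phi> (f x)) = (\<lambda>x. 2 * \<Phi> (f x) * \<Phi>' (f x) * L f x
      + (2 * (\<Phi>' (f x))\<^sup>2 + 2 * \<Phi> (f x) * \<Phi>'' (f x)) * Gamma L f x)"
  proof -
    have "real_polynomial_function (\<lambda>t. \<Phi> t * \<Phi> t)" using poly by auto
    from chain[OF this] show ?thesis using sq_deriv sq_deriv2 by simp
  qed
  show "(\<lambda>x. \<Phi> (f x)) \<in> A" using chain[OF poly] by blast
  show "Gamma L (\<lambda>x. \<Phi> (f x)) = (\<lambda>x. (\<Phi>' (f x))\<^sup>2 * Gamma L f x)"
    by (rule ext) (simp add: carre_du_champ_def L_\<Phi> L_\<Phi>_sq field_simps power2_eq_square)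
qed

lemma smoothed_signed_square:
  assumes f: "f \<in> A" and range: "\<And>x. \<bar>f x - m\<bar> \<le> R" and d: "0 < d"
  obtains g where "g \<in> A"
    "\<And>x. sqrt (Gamma L g x) \<le> (2 * \<bar>f x - m\<bar> + 2 * d) * sqrt (Gamma L f x)"
    "\<And>x. m \<le> f x \<Longrightarrow> (f x - m)\<^sup>2 \<le> g x"
    "\<And>x. f x \<le> m \<Longrightarrow> g x \<le> - (f x - m)\<^sup>2"
    "\<And>x b. f x \<le> b \<Longrightarrow> m \<le> b \<Longrightarrow> b - m \<le> R \<Longrightarrow> g x \<le> (b - m)\<^sup>2 + 2 * d * (b - m)"
    "\<And>x a. a \<le> f x \<Longrightarrow> a \<le> m \<Longrightarrow> - R \<le> a - m \<Longrightarrow> - (a - m)\<^sup>2 + 2 * d * (a - m) \<le> g x"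
proof -
  obtain P P1 where poly: "real_polynomial_function P"
    and P': "\<And>u. (P has_real_derivative P1 u) (at u)"
    and P1: "\<And>u. \<bar>u\<bar> \<le> R \<Longrightarrow> 0 \<le> P1 u \<and> P1 u \<le> 2 * \<bar>u\<bar> + 2 * d"
    and right: "\<And>u. 0 \<le> u \<Longrightarrow> u \<le> R \<Longrightarrow> u\<^sup>2 \<le> P u \<and> P u \<le> u\<^sup>2 + 2 * d * u"
    and left: "\<And>u. - R \<le> u \<Longrightarrow> u \<le> 0 \<Longrightarrow> - u\<^sup>2 + 2 * d * u \<le> P u \<and> P u \<le> - u\<^sup>2"
    and mono: "\<And>u v. - R \<le> u \<Longrightarrow> u \<le> v \<Longrightarrow> v \<le> R \<Longrightarrow> P u \<le> P v"
    using signed_square_approximation[OF d, of R] by blast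
  define g where "g x = P (f x - m)" for x
  have shift_poly: "real_polynomial_function (\<lambda>t. P (t - m))"
    using real_polynomial_function_compose[of "\<lambda>t. t - m" P] poly
    by (simp add: o_def polynomial_function_diff)
  have shift_deriv: "((\<lambda>t. P (t - m)) has_real_derivative P1 (t - m)) (at t)" for t
  proof -
    have "((\<lambda>t. t - m) has_real_derivative 1) (at t)" by (auto intro!: derivative_eq_intros)
    from DERIV_chain2[OF P' this] show ?thesis by simp
  qed
  note comp = Gamma_polynomial_comp[OF f shift_poly shift_deriv]
  have "g \<in> A" using comp(1) unfolding g_def .
  moreover have "sqrt (Gamma L g x) \<le> (2 * \<bar>f x - m\<bar> + 2 * d) * sqrt (Gamma L f x)" for x
  proof -
    have "sqrt (Gamma L g x) = P1 (f x - m) * sqrt (Gamma L f x)"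
      using comp(2) P1[OF range[of x]] unfolding g_def by (simp add: real_sqrt_mult)
    then show ?thesis using P1[OF range[of x]] by (simp add: mult_right_mono Gamma_nonneg[OF f])
  qed
  moreover have "(f x - m)\<^sup>2 \<le> g x" if "m \<le> f x" for x
    using right[of "f x - m"] range[of x] that unfolding g_def by simp
  moreover have "g x \<le> - (f x - m)\<^sup>2" if "f x \<le> m" for x
    using left[of "f x - m"] range[of x] that unfolding g_def by (simp add: abs_le_iff)
  moreover have "g x \<le> (b - m)\<^sup>2 + 2 * d * (b - m)" if "f x \<le> b" "m \<le> b" "b - m \<le> R" for x b
    using mono[of "f x - m" "b - m"] right[of "b - m"] range[of x] that unfolding g_def
    by (simp add: abs_le_iff)
  moreover have "- (a - m)\<^sup>2 + 2 * d * (a - m) \<le> g x" if "a \<le> f x" "a \<le> m" "- R \<le> a - m" for x a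
    using mono[of "a - m" "f x - m"] left[of "a - m"] range[of x] that unfolding g_def
    by (simp add: abs_le_iff)
  ultimately show ?thesis by (rule that)
qed

(* Young's inequality turns the gradient term of g into half the mean square deviation
   of f plus Gamma-terms of f. *)
lemma integral_sqrt_Gamma_bound:
  assumes f: "f \<in> A" and g: "g \<in> A" and \<beta>: "0 \<le> \<beta>"
    and comp: "\<And>x. sqrt (Gamma L g x) \<le> (2 * \<bar>f x - m\<bar> + 2 * d) * sqrt (Gamma L f x)"
  shows "\<beta> * (\<integral>x. sqrt (Gamma L g x) \<partial>M)
    \<le> (\<integral>x. (f x - m)\<^sup>2 \<partial>M) / 2 + 2 * \<beta>\<^sup>2 * (\<integral>x. Gamma L f x \<partial>M)
      + 2 * \<beta> * d * (\<integral>x. sqrt (Gamma L f x) \<partial>M)"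
proof -
  have int: "integrable M (\<lambda>x. (f x - m)\<^sup>2)" "integrable M (Gamma L f)"
    "integrable M (\<lambda>x. sqrt (Gamma L f x))"
    using A_integrable A_square_deviation Gamma_in_A sqrt_Gamma_integrable f by blast+
  have pointwise: "\<beta> * sqrt (Gamma L g x)
      \<le> (f x - m)\<^sup>2 / 2 + 2 * \<beta>\<^sup>2 * Gamma L f x + 2 * \<beta> * d * sqrt (Gamma L f x)" for x
  proof -
    have "\<beta> * sqrt (Gamma L g x) \<le> \<beta> * ((2 * \<bar>f x - m\<bar> + 2 * d) * sqrt (Gamma L f x))"
      using comp[of x] \<beta> by (rule mult_left_mono)
    also have "\<dots> = 2 * \<beta> * \<bar>f x - m\<bar> * sqrt (Gamma L f x) + 2 * \<beta> * d * sqrt (Gamma L f x)"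
      by (simp add: algebra_simps)
    also have "\<dots> \<le> (f x - m)\<^sup>2 / 2 + 2 * \<beta>\<^sup>2 * Gamma L f x + 2 * \<beta> * d * sqrt (Gamma L f x)"
      using young_product_bound[of \<beta> "f x - m" "sqrt (Gamma L f x)"] Gamma_nonneg[OF f, of x]
      by simp
    finally show ?thesis .
  qed
  have "\<beta> * (\<integral>x. sqrt (Gamma L g x) \<partial>M) = (\<integral>x. \<beta> * sqrt (Gamma L g x) \<partial>M)" by simp
  also have "\<dots> \<le> (\<integral>x. (f x - m)\<^sup>2 / 2 + 2 * \<beta>\<^sup>2 * Gamma L f x
      + 2 * \<beta> * d * sqrt (Gamma L f x) \<partial>M)"
    using int sqrt_Gamma_integrable[OF g] pointwise by (intro integral_mono) auto
  also have "\<dots> = (\<integral>x. (f x - m)\<^sup>2 \<partial>M) / 2 + 2 * \<beta>\<^sup>2 * (\<integral>x. Gamma L f x \<partial>M)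
      + 2 * \<beta> * d * (\<integral>x. sqrt (Gamma L f x) \<partial>M)"
    using int by simp
  finally show ?thesis .
qed

lemma essential_range_around_median:
  assumes f: "f \<in> A" and med: "median M f m"
  obtains a b R where "AE x in M. a \<le> f x" "AE x in M. f x \<le> b" "Osc M f = b - a"
    "a \<le> m" "m \<le> b" "- R \<le> a - m" "b - m \<le> R" "\<And>x. \<bar>f x - m\<bar> \<le> R"
proof -
  have fm: "f \<in> borel_measurable M" by (rule A_measurable[OF f])
  obtain C where C: "\<And>x. \<bar>f x\<bar> \<le> C" using A_bounded[OF f] by blast
  obtain a b where f_le_b: "AE x in M. f x \<le> b" and a_le_f: "AE x in M. a \<le> f x"
    and Osc_f: "Osc M f = b - a"
    and b_least: "\<And>c. (AE x in M. f x \<le> c) \<Longrightarrow> b \<le> c"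
    and a_greatest: "\<And>c. (AE x in M. c \<le> f x) \<Longrightarrow> c \<le> a"
    using Osc_ess_bounds[OF fm C] by metis
  have am: "a \<le> m" and mb: "m \<le> b"
    using median_between_ess_bounds[OF med fm a_le_f f_le_b] by auto
  have "b \<le> C" by (rule b_least) (use C in \<open>auto intro!: AE_I2 simp: abs_le_iff\<close>)
  moreover have "- C \<le> a"
    by (rule a_greatest) (use C in \<open>auto intro!: AE_I2 simp: abs_le_iff minus_le_iff\<close>)
  ultimately have "- (2 * C) \<le> a - m" "b - m \<le> 2 * C" "\<bar>f x - m\<bar> \<le> 2 * C" for x
    using C[of x] am mb by (auto simp: abs_le_iff)
  with that a_le_f f_le_b Osc_f am mb show ?thesis by blast
qed

lemma mean_square_deviation_approx_bound:
  assumes f: "f \<in> A" and med: "median M f m" and \<beta>: "0 \<le> \<beta>" and t: "0 \<le> t" and d: "0 < d"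
    and hyp: "\<And>g. g \<in> A \<Longrightarrow> median M g 0 \<Longrightarrow>
      (\<integral>x. \<bar>g x\<bar> \<partial>M) \<le> \<beta> * (\<integral>x. sqrt (Gamma L g x) \<partial>M) + t * Osc M g"
  shows "(\<integral>x. (f x - m)\<^sup>2 \<partial>M) \<le> 4 * \<beta>\<^sup>2 * (\<integral>x. Gamma L f x \<partial>M) + 2 * t * (Osc M f)\<^sup>2
      + d * (4 * \<beta> * (\<integral>x. sqrt (Gamma L f x) \<partial>M) + 4 * t * Osc M f)"
proof -
  obtain a b R where a_le_f: "AE x in M. a \<le> f x" and f_le_b: "AE x in M. f x \<le> b"
    and Osc_f: "Osc M f = b - a" and am: "a \<le> m" and mb: "m \<le> b"
    and bounds: "- R \<le> a - m" "b - m \<le> R" and range: "\<And>x. \<bar>f x - m\<bar> \<le> R"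
    using essential_range_around_median[OF f med] by metis
  obtain g where gA: "g \<in> A"
    and sqrt_Gamma_g: "\<And>x. sqrt (Gamma L g x) \<le> (2 * \<bar>f x - m\<bar> + 2 * d) * sqrt (Gamma L f x)"
    and up: "\<And>x. m \<le> f x \<Longrightarrow> (f x - m)\<^sup>2 \<le> g x"
    and down: "\<And>x. f x \<le> m \<Longrightarrow> g x \<le> - (f x - m)\<^sup>2"
    and hi: "\<And>x b. f x \<le> b \<Longrightarrow> m \<le> b \<Longrightarrow> b - m \<le> R
      \<Longrightarrow> g x \<le> (b - m)\<^sup>2 + 2 * d * (b - m)"
    and lo: "\<And>x a. a \<le> f x \<Longrightarrow> a \<le> m \<Longrightarrow> - R \<le> a - m
      \<Longrightarrow> - (a - m)\<^sup>2 + 2 * d * (a - m) \<le> g x"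
    using smoothed_signed_square[OF f range d] by blast
  have gm: "g \<in> borel_measurable M" by (rule A_measurable[OF gA])
  have "median M g 0"
  proof (rule median_zero_of_sign_compatible[OF med gm])
    show "0 \<le> g x" if "m \<le> f x" for x using up[OF that] zero_le_power2[of "f x - m"] by linarith
    show "g x \<le> 0" if "f x \<le> m" for x using down[OF that] zero_le_power2[of "f x - m"] by linarith
  qed
  then have hyp_g: "(\<integral>x. \<bar>g x\<bar> \<partial>M) \<le> \<beta> * (\<integral>x. sqrt (Gamma L g x) \<partial>M) + t * Osc M g"
    by (rule hyp[OF gA])
  have "(\<integral>x. (f x - m)\<^sup>2 \<partial>M) \<le> (\<integral>x. \<bar>g x\<bar> \<partial>M)"
  proof (rule integral_mono)
    show "integrable M (\<lambda>x. (f x - m)\<^sup>2)" by (rule A_integrable[OF A_square_deviation[OF f]])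
    show "integrable M (\<lambda>x. \<bar>g x\<bar>)" using A_integrable[OF gA] by simp
    show "(f x - m)\<^sup>2 \<le> \<bar>g x\<bar>" for x using up[of x] down[of x] by linarith
  qed
  moreover have "t * Osc M g \<le> t * ((b - a)\<^sup>2 + 2 * d * (b - a))"
  proof (rule mult_left_mono[OF _ t])
    obtain Cg where Cg: "\<And>x. \<bar>g x\<bar> \<le> Cg" using A_bounded[OF gA] by blast
    have "Osc M g \<le> ((b - m)\<^sup>2 + 2 * d * (b - m)) - (- (a - m)\<^sup>2 + 2 * d * (a - m))"
    proof (rule Osc_le[OF gm Cg])
      show "AE x in M. g x \<le> (b - m)\<^sup>2 + 2 * d * (b - m)"
        using f_le_b by (rule eventually_mono) (use hi mb bounds in blast)
      show "AE x in M. - (a - m)\<^sup>2 + 2 * d * (a - m) \<le> g x"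
        using a_le_f by (rule eventually_mono) (use lo am bounds in blast)
    qed
    also have "\<dots> = (b - a)\<^sup>2 + 2 * d * (b - a) - 2 * (b - m) * (m - a)"
      by (simp add: power2_eq_square algebra_simps)
    also have "\<dots> \<le> (b - a)\<^sup>2 + 2 * d * (b - a)" using am mb by simp
    finally show "Osc M g \<le> (b - a)\<^sup>2 + 2 * d * (b - a)" .
  qed
  ultimately have "(\<integral>x. (f x - m)\<^sup>2 \<partial>M) \<le> (\<integral>x. (f x - m)\<^sup>2 \<partial>M) / 2
      + 2 * \<beta>\<^sup>2 * (\<integral>x. Gamma L f x \<partial>M) + 2 * \<beta> * d * (\<integral>x. sqrt (Gamma L f x) \<partial>M)
      + t * ((b - a)\<^sup>2 + 2 * d * (b - a))"
    using hyp_g integral_sqrt_Gamma_bound[OF f gA \<beta> sqrt_Gamma_g] by linarith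
  then show ?thesis unfolding Osc_f by (simp add: algebra_simps)
qed

lemma mean_square_deviation_bound:
  assumes f: "f \<in> A" and med: "median M f m" and \<beta>: "0 \<le> \<beta>" and t: "0 \<le> t"
    and hyp: "\<And>g. g \<in> A \<Longrightarrow> median M g 0 \<Longrightarrow>
      (\<integral>x. \<bar>g x\<bar> \<partial>M) \<le> \<beta> * (\<integral>x. sqrt (Gamma L g x) \<partial>M) + t * Osc M g"
  shows "(\<integral>x. (f x - m)\<^sup>2 \<partial>M) \<le> 4 * \<beta>\<^sup>2 * (\<integral>x. Gamma L f x \<partial>M) + 2 * t * (Osc M f)\<^sup>2"
  by (rule le_of_le_plus_small_multiples)
    (rule mean_square_deviation_approx_bound[OF f med \<beta> t _ hyp])

end

theorem mainTheorem20:
  fixes M :: "'a::polish_space measure"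
    and A :: "('a \<Rightarrow> real) set"
    and L :: "('a \<Rightarrow> real) \<Rightarrow> ('a \<Rightarrow> real)"
    and \<beta> :: "real \<Rightarrow> real"
  assumes frame: "diffusion_framework M A L"
    and beta_nonneg: "\<forall>s>0. \<beta> s \<ge> 0"
    and hyp: "\<forall>f\<in>A. \<forall>m. median M f m \<longrightarrow> (\<forall>s. 0 < s \<and> s < 1 \<longrightarrow>
               (\<integral>x. \<bar>f x - m\<bar> \<partial>M)
                 \<le> \<beta> s * (\<integral>x. sqrt (Gamma L f x) \<partial>M) + s * Osc M f)"
  shows "\<forall>f\<in>A. \<forall>s. 0 < s \<and> s < 1/4 \<longrightarrow>
           prob_space.variance M f
             \<le> 4 * (\<beta> (s/2))\<^sup>2 * (\<integral>x. Gamma L f x \<partial>M) + s * (Osc M f)\<^sup>2"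
proof (intro ballI allI impI)
  fix f and s :: real
  assume f: "f \<in> A" and s: "0 < s \<and> s < 1/4"
  interpret diffusion M A L by (rule diffusion.intro[OF frame])
  obtain m where med: "median M f m" using median_exists[OF A_measurable[OF f]] .
  have hyp_half: "(\<integral>x. \<bar>g x\<bar> \<partial>M) \<le> \<beta> (s/2) * (\<integral>x. sqrt (Gamma L g x) \<partial>M) + s/2 * Osc M g"
    if "g \<in> A" "median M g 0" for g
    using hyp[rule_format, OF that, of "s/2"] s by simp
  have "variance f \<le> (\<integral>x. (f x - m)\<^sup>2 \<partial>M)"
    using A_integrable f A_square_deviation[OF f, of 0]
    by (intro variance_le_mean_square_deviation) auto
  also have "\<dots> \<le> 4 * (\<beta> (s/2))\<^sup>2 * (\<integral>x. Gamma L f x \<partial>M) + 2 * (s/2) * (Osc M f)\<^sup>2"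
    using beta_nonneg s by (intro mean_square_deviation_bound[OF f med _ _ hyp_half]) auto
  finally show "variance f \<le> 4 * (\<beta> (s/2))\<^sup>2 * (\<integral>x. Gamma L f x \<partial>M) + s * (Osc M f)\<^sup>2"
    by simp
qed

end
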